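(* Let $X,Y$ be vector spaces in separating duality, $X$ with $\sigma(X,Y)$. Let $f:X\to(-\infty,+\infty]$ be convex, lower semicontinuous, with $\mathrm{dom}\,f$ contained in a compact set, and let $V\subset X$ be closed and convex. If $V\cap\mathrm{dom}\,f\ne\emptyset$ or $V\cap\mathrm{cl}\,\mathrm{dom}\,f=\emptyset$, then $$\inf_{x\in V}f(x)=-\inf_{y\in Y}\big(f^*(y)+\xi_V^*(-y)\big)\in(-\infty,\infty].$$ If $V$ satisfies neither condition, then for every closed convex $W\subset\mathrm{int}\,V$, $$\inf_{x\in W}f(x)=-\inf_{y\in Y}\big(f^*(y)+\xi_W^*(-y)\big)=+\infty.$$
   Context: $\xi_C$: convex indicator of $C$ ($0$ on $C$, $+\infty$ outside); $\xi_C^*(y)=\sup_{x\in C}\langle x,y\rangle$ its support function. $f^*(y)=\sup_x\{\langle x,y\rangle-f(x)\}$. $\mathrm{dom}\,f=\{f<\infty\}$. *)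

theory Defs
  imports "HOL-Analysis.Analysis"
begin

definition separating_duality :: "('x::real_vector \<Rightarrow> 'y::real_vector \<Rightarrow> real) \<Rightarrow> bool" where
  "separating_duality B \<longleftrightarrow>
     (\<forall>y. linear (\<lambda>x. B x y)) \<and> (\<forall>x. linear (\<lambda>y. B x y)) \<and>
     (\<forall>x. x \<noteq> 0 \<longrightarrow> (\<exists>y. B x y \<noteq> 0)) \<and>
     (\<forall>y. y \<noteq> 0 \<longrightarrow> (\<exists>x. B x y \<noteq> 0))"

definition weak_top :: "('x \<Rightarrow> 'y \<Rightarrow> real) \<Rightarrow> 'x topology" where
  "weak_top B = topology_generated_by {(\<lambda>x. B x y) -` U | y U. open U}"

definition ereal_convex_fun :: "('x::real_vector \<Rightarrow> ereal) \<Rightarrow> bool" where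
  "ereal_convex_fun f \<longleftrightarrow>
     (\<forall>x y. \<forall>t::real. 0 < t \<and> t < 1 \<longrightarrow>
        f (t *\<^sub>R x + (1 - t) *\<^sub>R y) \<le> ereal t * f x + ereal (1 - t) * f y)"

definition lsc_on :: "'x topology \<Rightarrow> ('x \<Rightarrow> ereal) \<Rightarrow> bool" where
  "lsc_on T f \<longleftrightarrow> (\<forall>c::real. closedin T {x \<in> topspace T. f x \<le> ereal c})"

definition edom :: "('x \<Rightarrow> ereal) \<Rightarrow> 'x set" where
  "edom f = {x. f x < \<infinity>}"

definition fconj :: "('x \<Rightarrow> 'y \<Rightarrow> real) \<Rightarrow> ('x \<Rightarrow> ereal) \<Rightarrow> 'y \<Rightarrow> ereal" where
  "fconj B f y = (SUP x. ereal (B x y) - f x)"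

text \<open>Support function of C: conjugate of the convex indicator, sup_{x in C} <x,y>.\<close>
definition supp_fun :: "('x \<Rightarrow> 'y \<Rightarrow> real) \<Rightarrow> 'x set \<Rightarrow> 'y \<Rightarrow> ereal" where
  "supp_fun B C y = (SUP x\<in>C. ereal (B x y))"

end

theory Submission
  imports Defs
begin

(* Weak duality is the Fenchel-Young inequality. For the converse, fix a real c below
   the primal value. The weakly compact sublevel set {f \<le> c'} (c < c' < inf_V f) is
   disjoint from the closed set V, so by a finite-subcover argument finitely many
   functionals B(-,y), y \<in> Y, uniformly separate V from the points where f is almost
   below c. Consequently the convex set {(x - v, t) | v \<in> V, f x \<le> c + t} of X \<times> \<real> is
   bounded away from 0 in the finitely many coordinates t, B(-,y); a minimum-norm
   argument in these coordinates gives a strictly separating functional, which after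
   rescaling becomes a dual point y with f* y + \<xi>_V* (-y) \<le> -c.

   In particular the case distinction of
   mainTheorem17 is not needed for the duality formula itself: the second case only
   adds that the common value is +\<infinity> because W \<subseteq> V misses dom f. *)

lemma topspace_weak_top [simp]: "topspace (weak_top B) = UNIV"
proof -
  have "(\<lambda>x. B x y) -` UNIV \<in> {(\<lambda>x. B x y) -` U | y U. open U}" for y
    by blast
  then show ?thesis
    unfolding weak_top_def topology_generated_by_topspace by blast
qed

(* Basic weak neighbourhood of x: points that are e-close to x on the finitely many
   functionals B(-,y), y in Y (Y is intended to be finite). *)
definition weak_nbhd :: "('x \<Rightarrow> 'y \<Rightarrow> real) \<Rightarrow> 'x \<Rightarrow> 'y set \<Rightarrow> real \<Rightarrow> 'x set" where
  "weak_nbhd B x Y e = {z. \<forall>y\<in>Y. \<bar>B z y - B x y\<bar> < e}"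

lemma openin_weak_nbhd:
  assumes "finite Y"
  shows "openin (weak_top B) (weak_nbhd B x Y e)"
  using assms
proof (induction Y rule: finite_induct)
  case empty
  then show ?case
    using openin_topspace[of "weak_top B"] by (simp add: weak_nbhd_def)
next
  case (insert y Y)
  have "weak_nbhd B x (insert y Y) e = (\<lambda>z. B z y) -` ball (B x y) e \<inter> weak_nbhd B x Y e"
    by (auto simp: weak_nbhd_def dist_real_def abs_minus_commute)
  moreover have "openin (weak_top B) ((\<lambda>z. B z y) -` ball (B x y) e)"
    unfolding weak_top_def by (rule topology_generated_by_Basis) auto
  ultimately show ?case
    using insert.IH by auto
qed

lemma weak_nbhd_mono:
  "Y \<subseteq> Y' \<Longrightarrow> e' \<le> e \<Longrightarrow> weak_nbhd B x Y' e' \<subseteq> weak_nbhd B x Y e"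
  by (fastforce simp: weak_nbhd_def)

lemma weak_nbhd_triangle:
  assumes "s' \<in> weak_nbhd B s Y r" and "s' \<in> weak_nbhd B v Y r'"
  shows "v \<in> weak_nbhd B s Y (r + r')"
  unfolding weak_nbhd_def
proof (intro CollectI ballI)
  fix y
  assume "y \<in> Y"
  then have "\<bar>B s' y - B s y\<bar> < r" and "\<bar>B s' y - B v y\<bar> < r'"
    using assms by (auto simp: weak_nbhd_def)
  then show "\<bar>B v y - B s y\<bar> < r + r'"
    by (auto simp: abs_less_iff)
qed

lemma weak_nbhd_basis:
  assumes "openin (weak_top B) S" and "x \<in> S"
  shows "\<exists>Y e. finite Y \<and> e > 0 \<and> weak_nbhd B x Y e \<subseteq> S"
proof -
  have "generate_topology_on {(\<lambda>x. B x y) -` U | y U. open U} S"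
    using assms(1) unfolding weak_top_def by (rule openin_topology_generated_by)
  then show ?thesis
    using assms(2)
  proof (induction arbitrary: x rule: generate_topology_on.induct)
    case Empty
    then show ?case by simp
  next
    case (Int S1 S2)
    obtain Y1 e1 where 1: "finite Y1" "e1 > 0" "weak_nbhd B x Y1 e1 \<subseteq> S1"
      using Int.IH(1) Int.prems by blast
    obtain Y2 e2 where 2: "finite Y2" "e2 > 0" "weak_nbhd B x Y2 e2 \<subseteq> S2"
      using Int.IH(2) Int.prems by blast
    have "weak_nbhd B x (Y1 \<union> Y2) (min e1 e2) \<subseteq> S1 \<inter> S2"
      using 1(3) 2(3) weak_nbhd_mono[of Y1 "Y1 \<union> Y2" "min e1 e2" e1 B x]
        weak_nbhd_mono[of Y2 "Y1 \<union> Y2" "min e1 e2" e2 B x] by auto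
    then show ?case
      using 1 2 by (intro exI[of _ "Y1 \<union> Y2"] exI[of _ "min e1 e2"]) auto
  next
    case (UN \<K>)
    then obtain K where K: "K \<in> \<K>" "x \<in> K" by blast
    then obtain Y e where "finite Y" "e > 0" "weak_nbhd B x Y e \<subseteq> K"
      using UN.IH by blast
    then show ?case using K(1) by blast
  next
    case (Basis S)
    then obtain y U where S: "S = (\<lambda>x. B x y) -` U" "open U" by blast
    then obtain e where "e > 0" "ball (B x y) e \<subseteq> U"
      using Basis.prems open_contains_ball by blast
    then have "weak_nbhd B x {y} e \<subseteq> S"
      using S by (auto simp: weak_nbhd_def dist_real_def abs_minus_commute)
    then show ?case using \<open>e > 0\<close> by blast
  qed
qed

(* A weakly compact set S and a disjoint weakly closed set V are uniformly separated by
   finitely many functionals B(-,y): cover S by half-size basic neighbourhoods that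
   miss V and pass to a finite subcover. *)
lemma compact_closed_weak_gap:
  assumes S: "compactin (weak_top B) S" and V: "closedin (weak_top B) V"
    and disj: "S \<inter> V = {}"
  shows "\<exists>Y e. finite Y \<and> e > 0 \<and> (\<forall>s\<in>S. \<forall>v\<in>V. \<exists>y\<in>Y. e \<le> \<bar>B s y - B v y\<bar>)"
proof -
  have open_compl: "openin (weak_top B) (- V)"
    using V by (simp add: closedin_def Compl_eq_Diff_UNIV)
  have "\<exists>Y e. finite Y \<and> e > 0 \<and> weak_nbhd B s Y e \<subseteq> - V" if "s \<in> S" for s
  proof -
    have "s \<in> - V" using disj that by blast
    then show ?thesis by (rule weak_nbhd_basis[OF open_compl])
  qed
  then obtain Ys es where Ys: "\<And>s. s \<in> S \<Longrightarrow> finite (Ys s) \<and> es s > 0 \<and> weak_nbhd B s (Ys s) (es s) \<subseteq> - V"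
    by metis
  define U where "U s = weak_nbhd B s (Ys s) (es s / 2)" for s
  have "\<forall>W\<in>U ` S. openin (weak_top B) W"
    using Ys by (auto simp: U_def intro!: openin_weak_nbhd)
  moreover have "S \<subseteq> \<Union>(U ` S)"
    using Ys by (force simp: U_def weak_nbhd_def)
  ultimately obtain \<F> where "finite \<F>" "\<F> \<subseteq> U ` S" "S \<subseteq> \<Union>\<F>"
    using S unfolding compactin_def by meson
  then obtain S0 where S0: "S0 \<subseteq> S" "finite S0" "S \<subseteq> \<Union>(U ` S0)"
    by (metis finite_subset_image)
  define Y where "Y = \<Union>(Ys ` S0)"
  define e where "e = Min (insert 1 ((\<lambda>s. es s / 2) ` S0))"
  have "finite Y" "e > 0"
    using S0 Ys by (auto simp: Y_def e_def)
  moreover have "\<exists>y\<in>Y. e \<le> \<bar>B s' y - B v y\<bar>" if "s' \<in> S" "v \<in> V" for s' v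
  proof (rule ccontr)
    assume "\<not> ?thesis"
    then have close: "\<bar>B s' y - B v y\<bar> < e" if "y \<in> Y" for y
      using that by force
    obtain s where s: "s \<in> S0" "s' \<in> U s" using S0(3) \<open>s' \<in> S\<close> by blast
    have "e \<le> es s / 2"
      unfolding e_def using S0(2) s(1) by (intro Min_le) auto
    have "s' \<in> weak_nbhd B v Y e"
      using close by (simp add: weak_nbhd_def)
    moreover have "Ys s \<subseteq> Y"
      using s(1) by (auto simp: Y_def)
    ultimately have "s' \<in> weak_nbhd B v (Ys s) (es s / 2)"
      using weak_nbhd_mono[OF \<open>Ys s \<subseteq> Y\<close> \<open>e \<le> es s / 2\<close>, where B=B and x=v] by blast
    then have "v \<in> weak_nbhd B s (Ys s) (es s / 2 + es s / 2)"
      using s(2) unfolding U_def by (rule weak_nbhd_triangle[rotated])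
    then have "v \<in> weak_nbhd B s (Ys s) (es s)"
      by simp
    moreover have "weak_nbhd B s (Ys s) (es s) \<subseteq> - V"
      using Ys S0(1) s(1) by blast
    ultimately show False
      using \<open>v \<in> V\<close> by blast
  qed
  ultimately show ?thesis by blast
qed

lemma lsc_superlevel_openin:
  assumes "lsc_on T f"
  shows "openin T {x \<in> topspace T. ereal c < f x}"
proof -
  have "{x \<in> topspace T. ereal c < f x} = topspace T - {x \<in> topspace T. f x \<le> ereal c}"
    by auto
  moreover have "closedin T {x \<in> topspace T. f x \<le> ereal c}"
    using assms by (simp add: lsc_on_def)
  ultimately show ?thesis
    by (simp add: openin_diff)
qed

lemma lsc_bounded_below:
  assumes lsc: "lsc_on T f" and no_minf: "\<And>x. f x \<noteq> -\<infinity>"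
    and K: "compactin T K" and dom: "edom f \<subseteq> K"
  shows "\<exists>b::real. \<forall>x. ereal b \<le> f x"
proof -
  define U where "U n = {x \<in> topspace T. ereal (- real n) < f x}" for n :: nat
  have "K \<subseteq> (\<Union>n. U n)"
  proof
    fix x assume x: "x \<in> K"
    obtain n :: nat where "- real n < real_of_ereal (f x)"
      using reals_Archimedean2 by (metis minus_less_iff)
    then have "ereal (- real n) < f x"
      using no_minf[of x] by (cases "f x") auto
    then show "x \<in> (\<Union>n. U n)"
      using x compactin_subset_topspace[OF K] by (auto simp: U_def)
  qed
  moreover have "\<forall>W\<in>range U. openin T W"
    using lsc_superlevel_openin[OF lsc] by (auto simp: U_def)
  ultimately obtain \<F> where \<F>: "finite \<F>" "\<F> \<subseteq> range U" "K \<subseteq> \<Union>\<F>"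
    using K unfolding compactin_def by meson
  obtain N where N: "finite N" "K \<subseteq> (\<Union>n\<in>N. U n)"
    using finite_subset_image[OF \<F>(1,2)] \<F>(3) by blast
  have "ereal (- real (Max (insert 0 N))) \<le> f x" for x
  proof (cases "x \<in> K")
    case True
    then obtain n where n: "n \<in> N" "ereal (- real n) < f x"
      using N(2) by (auto simp: U_def)
    have "n \<le> Max (insert 0 N)"
      using N(1) n(1) by simp
    then have "ereal (- real (Max (insert 0 N))) \<le> ereal (- real n)"
      by simp
    then show ?thesis
      using n(2) by (meson less_imp_le order_trans)
  next
    case False
    then have "f x = \<infinity>"
      using dom by (auto simp: edom_def)
    then show ?thesis by simp
  qed
  then show ?thesis by blast
qed

(* This uses compactness of the sublevel set {f \<le> c'}. *)
lemma lsc_sublevel_gap: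
  assumes lsc: "lsc_on (weak_top B) f" and K: "compactin (weak_top B) K" and dom: "edom f \<subseteq> K"
    and V: "closedin (weak_top B) V" and cc': "c < c'" and above: "\<forall>v\<in>V. ereal c' < f v"
  shows "\<exists>Y e. finite Y \<and> e > 0 \<and>
           (\<forall>x v. v \<in> V \<longrightarrow> (\<forall>y\<in>Y. \<bar>B x y - B v y\<bar> < e) \<longrightarrow> ereal (c + e) \<le> f x)"
proof -
  define S where "S = {x. f x \<le> ereal c'}"
  have "closedin (weak_top B) S"
    using lsc by (simp add: lsc_on_def S_def)
  moreover have "S \<subseteq> K"
  proof
    fix x assume "x \<in> S"
    then have "f x \<le> ereal c'"
      by (simp add: S_def)
    then have "f x < \<infinity>"
      using le_less_trans by fastforce
    then show "x \<in> K"
      using dom by (simp add: edom_def subset_eq)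
  qed
  ultimately have S_compact: "compactin (weak_top B) S"
    using K closed_compactin by blast
  have S_V: "S \<inter> V = {}"
    using above unfolding S_def by (auto simp: not_le[symmetric])
  obtain Y e where Y: "finite Y" "e > 0"
    and gap: "\<forall>s\<in>S. \<forall>v\<in>V. \<exists>y\<in>Y. e \<le> \<bar>B s y - B v y\<bar>"
    using compact_closed_weak_gap[OF S_compact V S_V] by blast
  show ?thesis
  proof (intro exI conjI allI impI)
    show "finite Y" "min e (c' - c) > 0"
      using Y cc' by auto
    fix x v
    assume v: "v \<in> V" and close: "\<forall>y\<in>Y. \<bar>B x y - B v y\<bar> < min e (c' - c)"
    have "x \<notin> S"
    proof
      assume "x \<in> S"
      then obtain y where "y \<in> Y" "e \<le> \<bar>B x y - B v y\<bar>"
        using gap v by blast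
      with close show False by force
    qed
    then have "ereal c' < f x"
      by (simp add: S_def)
    moreover have "ereal (c + min e (c' - c)) \<le> ereal c'"
      by simp
    ultimately show "ereal (c + min e (c' - c)) \<le> f x"
      by (meson less_imp_le order_trans)
  qed
qed

lemma Cauchy_if_sq_dist_bound:
  fixes X :: "nat \<Rightarrow> real"
  assumes bound: "\<And>m n. (X m - X n)\<^sup>2 \<le> r m + r n" and r: "r \<longlonglongrightarrow> 0"
  shows "Cauchy X"
proof (rule metric_CauchyI)
  fix e :: real
  assume "0 < e"
  then have "eventually (\<lambda>n. r n < e\<^sup>2 / 2) sequentially"
    using r by (intro order_tendstoD(2)) auto
  then obtain M where M: "\<And>n. n \<ge> M \<Longrightarrow> r n < e\<^sup>2 / 2"
    by (auto simp: eventually_sequentially)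
  show "\<exists>M. \<forall>m\<ge>M. \<forall>n\<ge>M. dist (X m) (X n) < e"
  proof (intro exI allI impI)
    fix m n
    assume "M \<le> m" "M \<le> n"
    then have "\<bar>X m - X n\<bar>\<^sup>2 < e\<^sup>2"
      using bound[of m n] M[of m] M[of n] by simp
    then show "dist (X m) (X n) < e"
      using \<open>0 < e\<close> by (simp add: dist_real_def power2_less_imp_less)
  qed
qed

lemma parallelogram_sum_squares:
  fixes \<phi> :: "'i \<Rightarrow> 'z::real_vector \<Rightarrow> real"
  assumes fin: "finite I" and lin: "\<And>i. i \<in> I \<Longrightarrow> linear (\<phi> i)" and j: "j \<in> I"
  shows "(\<phi> j a - \<phi> j b)\<^sup>2 \<le> 2 * (\<Sum>i\<in>I. (\<phi> i a)\<^sup>2) + 2 * (\<Sum>i\<in>I. (\<phi> i b)\<^sup>2)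
           - 4 * (\<Sum>i\<in>I. (\<phi> i ((1/2) *\<^sub>R a + (1/2) *\<^sub>R b))\<^sup>2)"
proof -
  have mid: "\<phi> i ((1/2) *\<^sub>R a + (1/2) *\<^sub>R b) = (\<phi> i a + \<phi> i b) / 2" if "i \<in> I" for i
    using lin[OF that] by (simp add: linear_add linear_scale)
  have "(\<phi> j a - \<phi> j b)\<^sup>2 \<le> (\<Sum>i\<in>I. (\<phi> i a - \<phi> i b)\<^sup>2)"
    using fin j by (intro member_le_sum) auto
  also have "\<dots> = (\<Sum>i\<in>I. 2 * (\<phi> i a)\<^sup>2 + 2 * (\<phi> i b)\<^sup>2
                        - 4 * (\<phi> i ((1/2) *\<^sub>R a + (1/2) *\<^sub>R b))\<^sup>2)"
    by (intro sum.cong refl) (simp add: mid power2_eq_square algebra_simps)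
  also have "\<dots> = 2 * (\<Sum>i\<in>I. (\<phi> i a)\<^sup>2) + 2 * (\<Sum>i\<in>I. (\<phi> i b)\<^sup>2)
           - 4 * (\<Sum>i\<in>I. (\<phi> i ((1/2) *\<^sub>R a + (1/2) *\<^sub>R b))\<^sup>2)"
    by (simp add: sum.distrib sum_subtractf sum_distrib_left)
  finally show ?thesis .
qed

lemma minimizing_sequence_converges:
  fixes \<phi> :: "'i \<Rightarrow> 'z::real_vector \<Rightarrow> real"
  assumes fin: "finite I" and lin: "\<And>i. i \<in> I \<Longrightarrow> linear (\<phi> i)"
    and cvx: "convex C" and ne: "C \<noteq> {}"
  defines "d \<equiv> Inf ((\<lambda>c. \<Sum>i\<in>I. (\<phi> i c)\<^sup>2) ` C)"
  shows "\<exists>s q. (\<forall>k. s k \<in> C) \<and> (\<lambda>k. \<Sum>i\<in>I. (\<phi> i (s k))\<^sup>2) \<longlonglongrightarrow> d \<and>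
           (\<forall>i\<in>I. (\<lambda>k. \<phi> i (s k)) \<longlonglongrightarrow> q i)"
proof -
  define Q where "Q c = (\<Sum>i\<in>I. (\<phi> i c)\<^sup>2)" for c
  have bdd: "bdd_below (Q ` C)"
    by (rule bdd_belowI2[of _ 0]) (simp add: Q_def sum_nonneg)
  have d_le: "d \<le> Q c" if "c \<in> C" for c
    unfolding d_def Q_def[symmetric] using bdd that by (simp add: cInf_lower)
  have "d \<in> closure (Q ` C)"
    unfolding d_def Q_def[symmetric] using ne bdd by (intro closure_contains_Inf) auto
  then obtain u where u: "\<And>k. u k \<in> Q ` C" and "u \<longlonglongrightarrow> d"
    by (auto simp: closure_sequential)
  have "\<forall>k. \<exists>c. c \<in> C \<and> u k = Q c"
    using u by blast
  from choice[OF this] obtain s where s: "\<forall>k. s k \<in> C \<and> u k = Q (s k)" ..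
  then have s_in: "\<And>k. s k \<in> C" and "u = (\<lambda>k. Q (s k))"
    by auto
  with \<open>u \<longlonglongrightarrow> d\<close> have Q_s: "(\<lambda>k. Q (s k)) \<longlonglongrightarrow> d"
    by simp
  define r where "r k = 2 * (Q (s k) - d)" for k
  have "r \<longlonglongrightarrow> 2 * (d - d)"
    unfolding r_def by (intro tendsto_intros Q_s)
  then have r: "r \<longlonglongrightarrow> 0" by simp
  have cauchy: "Cauchy (\<lambda>k. \<phi> i (s k))" if i: "i \<in> I" for i
  proof (rule Cauchy_if_sq_dist_bound[OF _ r])
    fix m n
    have "(1/2) *\<^sub>R s m + (1/2) *\<^sub>R s n \<in> C"
      using cvx s_in by (intro convexD) auto
    then have "d \<le> Q ((1/2) *\<^sub>R s m + (1/2) *\<^sub>R s n)"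
      by (rule d_le)
    moreover have "(\<phi> i (s m) - \<phi> i (s n))\<^sup>2
        \<le> 2 * Q (s m) + 2 * Q (s n) - 4 * Q ((1/2) *\<^sub>R s m + (1/2) *\<^sub>R s n)"
      unfolding Q_def by (rule parallelogram_sum_squares[OF fin lin i])
    ultimately show "(\<phi> i (s m) - \<phi> i (s n))\<^sup>2 \<le> r m + r n"
      unfolding r_def right_diff_distrib by linarith
  qed
  define q where "q i = lim (\<lambda>k. \<phi> i (s k))" for i
  have "(\<lambda>k. \<phi> i (s k)) \<longlonglongrightarrow> q i" if "i \<in> I" for i
    using cauchy[OF that] unfolding q_def by (simp add: Cauchy_convergent_iff convergent_LIMSEQ_iff)
  with s_in Q_s show ?thesis
    unfolding Q_def by blast
qed

lemma sum_squares_infimum_limit: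
  fixes \<phi> :: "'i \<Rightarrow> 'z::real_vector \<Rightarrow> real"
  assumes fin: "finite I" and lin: "\<And>i. i \<in> I \<Longrightarrow> linear (\<phi> i)"
    and cvx: "convex C" and ne: "C \<noteq> {}"
  defines "d \<equiv> Inf ((\<lambda>c. \<Sum>i\<in>I. (\<phi> i c)\<^sup>2) ` C)"
  shows "\<exists>q. (\<Sum>i\<in>I. (q i)\<^sup>2) = d \<and>
           (\<forall>c\<in>C. \<forall>t. 0 \<le> t \<and> t \<le> 1 \<longrightarrow> d \<le> (\<Sum>i\<in>I. ((1 - t) * q i + t * \<phi> i c)\<^sup>2))"
proof -
  obtain s q where s_in: "\<And>k. s k \<in> C" and Q_s: "(\<lambda>k. \<Sum>i\<in>I. (\<phi> i (s k))\<^sup>2) \<longlonglongrightarrow> d"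
    and q: "\<And>i. i \<in> I \<Longrightarrow> (\<lambda>k. \<phi> i (s k)) \<longlonglongrightarrow> q i"
    using minimizing_sequence_converges[of I \<phi> C, OF fin lin cvx ne] unfolding d_def by blast
  have d_le: "d \<le> (\<Sum>i\<in>I. (\<phi> i c)\<^sup>2)" if "c \<in> C" for c
    unfolding d_def using that by (intro cInf_lower bdd_belowI2[of _ 0]) (auto simp: sum_nonneg)
  have "(\<lambda>k. \<Sum>i\<in>I. (\<phi> i (s k))\<^sup>2) \<longlonglongrightarrow> (\<Sum>i\<in>I. (q i)\<^sup>2)"
    by (intro tendsto_sum tendsto_power q)
  with Q_s have sum_q: "(\<Sum>i\<in>I. (q i)\<^sup>2) = d"
    by (rule LIMSEQ_unique[rotated])
  have "d \<le> (\<Sum>i\<in>I. ((1 - t) * q i + t * \<phi> i c)\<^sup>2)" if c: "c \<in> C" and t: "0 \<le> t" "t \<le> 1" for c t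
  proof (rule LIMSEQ_le_const)
    have "(\<lambda>k. \<Sum>i\<in>I. ((1 - t) * \<phi> i (s k) + t * \<phi> i c)\<^sup>2) \<longlonglongrightarrow> (\<Sum>i\<in>I. ((1 - t) * q i + t * \<phi> i c)\<^sup>2)"
      by (intro tendsto_sum tendsto_power tendsto_add tendsto_mult tendsto_const q)
    moreover have "(\<Sum>i\<in>I. (\<phi> i ((1 - t) *\<^sub>R s k + t *\<^sub>R c))\<^sup>2)
        = (\<Sum>i\<in>I. ((1 - t) * \<phi> i (s k) + t * \<phi> i c)\<^sup>2)" for k
      by (intro sum.cong refl) (simp add: lin linear_add linear_scale)
    ultimately show "(\<lambda>k. \<Sum>i\<in>I. (\<phi> i ((1 - t) *\<^sub>R s k + t *\<^sub>R c))\<^sup>2)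
        \<longlonglongrightarrow> (\<Sum>i\<in>I. ((1 - t) * q i + t * \<phi> i c)\<^sup>2)"
      by simp
    have "(1 - t) *\<^sub>R s k + t *\<^sub>R c \<in> C" for k
      using t by (intro convexD[OF cvx s_in c]) auto
    then show "\<exists>N. \<forall>k\<ge>N. d \<le> (\<Sum>i\<in>I. (\<phi> i ((1 - t) *\<^sub>R s k + t *\<^sub>R c))\<^sup>2)"
      using d_le by blast
  qed
  with sum_q show ?thesis by blast
qed

lemma first_order_condition_sum_squares:
  fixes q a :: "'i \<Rightarrow> real"
  assumes min: "\<And>t. 0 < t \<Longrightarrow> t \<le> 1 \<Longrightarrow> (\<Sum>i\<in>I. (q i)\<^sup>2) \<le> (\<Sum>i\<in>I. ((1 - t) * q i + t * a i)\<^sup>2)"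
  shows "(\<Sum>i\<in>I. (q i)\<^sup>2) \<le> (\<Sum>i\<in>I. q i * a i)"
proof -
  define A where "A = (\<Sum>i\<in>I. q i * (a i - q i))"
  define D where "D = (\<Sum>i\<in>I. (a i - q i)\<^sup>2)"
  have expand: "(\<Sum>i\<in>I. ((1 - t) * q i + t * a i)\<^sup>2) = (\<Sum>i\<in>I. (q i)\<^sup>2) + t * (2 * A + t * D)" for t
  proof -
    have "(\<Sum>i\<in>I. ((1 - t) * q i + t * a i)\<^sup>2)
        = (\<Sum>i\<in>I. (q i)\<^sup>2 + (2 * t) * (q i * (a i - q i)) + t\<^sup>2 * (a i - q i)\<^sup>2)"
      by (intro sum.cong refl) (simp add: power2_eq_square algebra_simps)
    also have "\<dots> = (\<Sum>i\<in>I. (q i)\<^sup>2) + (2 * t) * A + t\<^sup>2 * D"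
      by (simp add: A_def D_def sum.distrib sum_distrib_left)
    finally show ?thesis
      by (simp add: power2_eq_square algebra_simps)
  qed
  have "eventually (\<lambda>t. 0 \<le> 2 * A + t * D) (at_right 0)"
    using eventually_at_right_real[OF zero_less_one]
  proof (rule eventually_mono)
    fix t :: real
    assume "t \<in> {0<..<1}"
    then have "0 \<le> t * (2 * A + t * D)"
      using min[of t] expand[of t] by simp
    then show "0 \<le> 2 * A + t * D"
      using \<open>t \<in> {0<..<1}\<close> by (simp add: zero_le_mult_iff)
  qed
  moreover have "((\<lambda>t. 2 * A + t * D) \<longlongrightarrow> 2 * A + 0 * D) (at_right 0)"
    by (intro tendsto_intros)
  ultimately have "0 \<le> 2 * A + 0 * D"
    by (intro tendsto_lowerbound) auto
  moreover have "(\<Sum>i\<in>I. q i * a i) = (\<Sum>i\<in>I. (q i)\<^sup>2) + A"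
    by (simp add: A_def sum.distrib[symmetric] power2_eq_square algebra_simps)
  ultimately show ?thesis by simp
qed

lemma finite_functional_separation:
  fixes \<phi> :: "'i \<Rightarrow> 'z::real_vector \<Rightarrow> real"
  assumes fin: "finite I" and lin: "\<And>i. i \<in> I \<Longrightarrow> linear (\<phi> i)" and cvx: "convex C"
    and eps: "\<epsilon> > 0" and far: "\<And>c. c \<in> C \<Longrightarrow> \<exists>i\<in>I. \<epsilon> \<le> \<bar>\<phi> i c\<bar>"
  shows "\<exists>w \<delta>. \<delta> > 0 \<and> (\<forall>c\<in>C. \<delta> \<le> (\<Sum>i\<in>I. w i * \<phi> i c))"
proof (cases "C = {}")
  case True
  then show ?thesis by (intro exI[of _ "\<lambda>_. 0"] exI[of _ 1]) auto
next
  case False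
  define d where "d = Inf ((\<lambda>c. \<Sum>i\<in>I. (\<phi> i c)\<^sup>2) ` C)"
  obtain q where sum_q: "(\<Sum>i\<in>I. (q i)\<^sup>2) = d"
    and min: "\<And>c t. c \<in> C \<Longrightarrow> 0 \<le> t \<Longrightarrow> t \<le> 1 \<Longrightarrow> d \<le> (\<Sum>i\<in>I. ((1 - t) * q i + t * \<phi> i c)\<^sup>2)"
    using sum_squares_infimum_limit[of I \<phi> C, OF fin lin cvx False] unfolding d_def by blast
  have "\<epsilon>\<^sup>2 \<le> (\<Sum>i\<in>I. (\<phi> i c)\<^sup>2)" if c: "c \<in> C" for c
  proof -
    obtain i where i: "i \<in> I" "\<epsilon> \<le> \<bar>\<phi> i c\<bar>"
      using far[OF c] by blast
    then have "\<epsilon>\<^sup>2 \<le> \<bar>\<phi> i c\<bar>\<^sup>2"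
      using eps by (intro power_mono) auto
    also have "\<dots> = (\<phi> i c)\<^sup>2"
      by simp
    also have "\<dots> \<le> (\<Sum>i\<in>I. (\<phi> i c)\<^sup>2)"
      using fin i(1) by (intro member_le_sum) auto
    finally show ?thesis .
  qed
  then have eps_d: "\<epsilon>\<^sup>2 \<le> d"
    unfolding d_def using False by (intro cInf_greatest) auto
  have "\<epsilon>\<^sup>2 \<le> (\<Sum>i\<in>I. q i * \<phi> i c)" if c: "c \<in> C" for c
  proof -
    have "(\<Sum>i\<in>I. (q i)\<^sup>2) \<le> (\<Sum>i\<in>I. q i * \<phi> i c)"
      by (rule first_order_condition_sum_squares) (use min[OF c] sum_q in auto)
    then show ?thesis
      using eps_d sum_q by linarith
  qed
  then show ?thesis
    using eps by (intro exI[of _ q] exI[of _ "\<epsilon>\<^sup>2"]) auto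
qed

lemma ereal_convex_fun_le:
  assumes f: "ereal_convex_fun f" and uv: "0 \<le> u" "0 \<le> v" "u + v = 1"
    and x1: "f x1 \<le> ereal a1" and x2: "f x2 \<le> ereal a2"
  shows "f (u *\<^sub>R x1 + v *\<^sub>R x2) \<le> ereal (u * a1 + v * a2)"
proof (cases "u = 0 \<or> v = 0")
  case True
  with uv x1 x2 show ?thesis by auto
next
  case False
  then have u: "0 < u" "u < 1" and v: "v = 1 - u"
    using uv by auto
  have "f (u *\<^sub>R x1 + v *\<^sub>R x2) \<le> ereal u * f x1 + ereal (1 - u) * f x2"
    using f u unfolding ereal_convex_fun_def v by blast
  also have "\<dots> \<le> ereal u * ereal a1 + ereal (1 - u) * ereal a2"
    using u x1 x2 by (intro add_mono ereal_mult_left_mono) auto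
  finally show ?thesis
    by (simp add: v)
qed

lemma convex_shifted_epigraph:
  assumes f: "ereal_convex_fun f" and V: "convex V"
  shows "convex {(x - v, t) | x v t. v \<in> V \<and> f x \<le> ereal (c + t)}"
proof (rule convexI)
  fix p1 p2 and u w :: real
  assume "p1 \<in> {(x - v, t) | x v t. v \<in> V \<and> f x \<le> ereal (c + t)}"
    and "p2 \<in> {(x - v, t) | x v t. v \<in> V \<and> f x \<le> ereal (c + t)}"
    and uw: "0 \<le> u" "0 \<le> w" "u + w = 1"
  then obtain x1 v1 t1 x2 v2 t2 where p: "p1 = (x1 - v1, t1)" "p2 = (x2 - v2, t2)"
    and v: "v1 \<in> V" "v2 \<in> V" and fx: "f x1 \<le> ereal (c + t1)" "f x2 \<le> ereal (c + t2)"
    by blast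
  have "u *\<^sub>R v1 + w *\<^sub>R v2 \<in> V"
    using V v uw by (intro convexD) auto
  moreover have "u * (c + t1) + w * (c + t2) = (u + w) * c + (u * t1 + w * t2)"
    by (simp add: algebra_simps)
  then have "f (u *\<^sub>R x1 + w *\<^sub>R x2) \<le> ereal (c + (u * t1 + w * t2))"
    using ereal_convex_fun_le[OF f uw fx] uw(3) by simp
  moreover have "u *\<^sub>R p1 + w *\<^sub>R p2
      = ((u *\<^sub>R x1 + w *\<^sub>R x2) - (u *\<^sub>R v1 + w *\<^sub>R v2), u * t1 + w * t2)"
    by (simp add: p algebra_simps)
  ultimately show "u *\<^sub>R p1 + w *\<^sub>R p2 \<in> {(x - v, t) | x v t. v \<in> V \<and> f x \<le> ereal (c + t)}"
    by blast
qed

definition coord :: "('x \<Rightarrow> 'y \<Rightarrow> real) \<Rightarrow> 'y option \<Rightarrow> 'x \<times> real \<Rightarrow> real" where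
  "coord B i p = (case i of None \<Rightarrow> snd p | Some y \<Rightarrow> B (fst p) y)"

lemma linear_coord:
  assumes lin1: "\<And>y. linear (\<lambda>x. B x y)"
  shows "linear (coord B i)"
proof (cases i)
  case None
  have "coord B None = snd"
    by (simp add: coord_def fun_eq_iff)
  then show ?thesis
    using None linear_snd by simp
next
  case (Some y)
  have "coord B (Some y) = (\<lambda>x. B x y) \<circ> fst"
    by (simp add: coord_def fun_eq_iff)
  moreover have "linear ((\<lambda>x. B x y) \<circ> fst)"
    using lin1 linear_fst by (rule linear_compose[rotated])
  ultimately show ?thesis
    using Some by simp
qed

lemma sum_coord:
  fixes B :: "'x::real_vector \<Rightarrow> 'y::real_vector \<Rightarrow> real"
  assumes lin2: "\<And>x. linear (\<lambda>y. B x y)" and Y: "finite Y"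
  shows "(\<Sum>i\<in>insert None (Some ` Y). w i * coord B i p)
           = w None * snd p + B (fst p) (\<Sum>y\<in>Y. w (Some y) *\<^sub>R y)"
proof -
  have "(\<Sum>i\<in>insert None (Some ` Y). w i * coord B i p)
      = w None * snd p + (\<Sum>y\<in>Y. w (Some y) * B (fst p) y)"
    using Y by (simp add: coord_def sum.reindex)
  also have "(\<Sum>y\<in>Y. w (Some y) * B (fst p) y) = B (fst p) (\<Sum>y\<in>Y. w (Some y) *\<^sub>R y)"
    by (simp add: linear_sum[OF lin2] linear_scale[OF lin2])
  finally show ?thesis .
qed

lemma shifted_epigraph_far_from_origin:
  fixes B :: "'x::real_vector \<Rightarrow> 'y::real_vector \<Rightarrow> real"
  assumes lin1: "\<And>y. linear (\<lambda>x. B x y)" and e: "e > 0"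
    and gap: "\<forall>x v. v \<in> V \<longrightarrow> (\<forall>y\<in>Y. \<bar>B x y - B v y\<bar> < e) \<longrightarrow> ereal (c + e) \<le> f x"
    and p: "p \<in> {(x - v, t) | x v t. v \<in> V \<and> f x \<le> ereal (c + t)}"
  shows "\<exists>i\<in>insert None (Some ` Y). e \<le> \<bar>coord B i p\<bar>"
proof (rule ccontr)
  assume "\<not> ?thesis"
  then have small: "\<bar>coord B i p\<bar> < e" if "i \<in> insert None (Some ` Y)" for i
    using that by force
  obtain x v t where p: "p = (x - v, t)" and v: "v \<in> V" and fx: "f x \<le> ereal (c + t)"
    using p by blast
  have "\<bar>B x y - B v y\<bar> < e" if "y \<in> Y" for y
    using small[of "Some y"] that by (simp add: coord_def p linear_diff[OF lin1])
  then have "ereal (c + e) \<le> ereal (c + t)"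
    using gap v fx by (meson order_trans)
  moreover have "\<bar>t\<bar> < e"
    using small[of None] by (simp add: coord_def p)
  ultimately show False by simp
qed

lemma separation_from_uniform_gap:
  fixes B :: "'x::real_vector \<Rightarrow> 'y::real_vector \<Rightarrow> real"
  assumes lin1: "\<And>y. linear (\<lambda>x. B x y)" and lin2: "\<And>x. linear (\<lambda>y. B x y)"
    and f: "ereal_convex_fun f" and V: "convex V"
    and Y: "finite Y" and e: "e > 0"
    and gap: "\<forall>x v. v \<in> V \<longrightarrow> (\<forall>y\<in>Y. \<bar>B x y - B v y\<bar> < e) \<longrightarrow> ereal (c + e) \<le> f x"
  shows "\<exists>\<delta> \<mu> z. \<delta> > 0 \<and>
           (\<forall>x v t. v \<in> V \<longrightarrow> f x \<le> ereal (c + t) \<longrightarrow> \<delta> \<le> \<mu> * t + (B x z - B v z))"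
proof -
  define C where "C = {(x - v, t) | x v t. v \<in> V \<and> f x \<le> ereal (c + t)}"
  define I where "I = insert None (Some ` Y)"
  have fin: "finite I"
    using Y by (simp add: I_def)
  have lin: "linear (coord B i)" if "i \<in> I" for i
    using lin1 by (rule linear_coord)
  have cvx: "convex C"
    unfolding C_def by (rule convex_shifted_epigraph[OF f V])
  have far: "\<exists>i\<in>I. e \<le> \<bar>coord B i p\<bar>" if "p \<in> C" for p
    unfolding I_def using shifted_epigraph_far_from_origin[OF lin1 e gap] that by (simp add: C_def)
  obtain w \<delta> where \<delta>: "\<delta> > 0" and sep: "\<forall>p\<in>C. \<delta> \<le> (\<Sum>i\<in>I. w i * coord B i p)"
    using finite_functional_separation[OF fin lin cvx e far] by blast
  define z where "z = (\<Sum>y\<in>Y. w (Some y) *\<^sub>R y)"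
  have "\<delta> \<le> w None * t + (B x z - B v z)" if "v \<in> V" "f x \<le> ereal (c + t)" for x v t
  proof -
    have "(x - v, t) \<in> C"
      using that by (auto simp: C_def)
    then have "\<delta> \<le> (\<Sum>i\<in>I. w i * coord B i (x - v, t))"
      using sep by blast
    then show ?thesis
      unfolding I_def z_def by (simp add: sum_coord[OF lin2 Y] linear_diff[OF lin1])
  qed
  with \<delta> show ?thesis by blast
qed

(* The real slope \<mu> of the separating functional is nonnegative, since the inequality
   holds at a fixed point of dom f for arbitrarily large t. *)
lemma separation_slope_nonneg:
  assumes x0: "f x0 = ereal r0" and v0: "v0 \<in> V"
    and sep: "\<And>x v t. v \<in> V \<Longrightarrow> f x \<le> ereal (c + t) \<Longrightarrow> \<delta> \<le> \<mu> * t + (B x z - B v z)"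
  shows "0 \<le> \<mu>"
proof (rule ccontr)
  assume neg: "\<not> 0 \<le> \<mu>"
  define t where "t = max (r0 - c) ((\<delta> - (B x0 z - B v0 z)) / \<mu> + 1)"
  have "\<delta> \<le> \<mu> * t + (B x0 z - B v0 z)"
    using sep[OF v0] x0 by (simp add: t_def)
  moreover have "\<mu> * t \<le> \<mu> * ((\<delta> - (B x0 z - B v0 z)) / \<mu> + 1)"
    using neg by (intro mult_left_mono_neg) (auto simp: t_def)
  ultimately show False
    using neg by (simp add: distrib_left)
qed

(* Turning the separating functional into a dual point y, i.e. an affine minorant of f
   on X relative to V: for \<mu> > 0 rescale z by -1/\<mu>; for \<mu> = 0 use a large multiple of
   -z together with the lower bound b of f. *)
lemma affine_minorant_from_separation:
  fixes B :: "'x::real_vector \<Rightarrow> 'y::real_vector \<Rightarrow> real"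
  assumes lin2: "\<And>x. linear (\<lambda>y. B x y)"
    and bound: "\<And>x. ereal b \<le> f x" and x0: "f x0 = ereal r0" and v0: "v0 \<in> V"
    and \<delta>: "\<delta> > 0"
    and sep: "\<And>x v t. v \<in> V \<Longrightarrow> f x \<le> ereal (c + t) \<Longrightarrow> \<delta> \<le> \<mu> * t + (B x z - B v z)"
  shows "\<exists>y. \<forall>x v. v \<in> V \<longrightarrow> ereal (c + B x y - B v y) \<le> f x"
proof -
  have sep_real: "\<delta> \<le> \<mu> * (r - c) + (B x z - B v z)" if "v \<in> V" "f x = ereal r" for x v r
    using sep[of v x "r - c"] that by simp
  have "\<exists>y. \<forall>x v r. v \<in> V \<longrightarrow> f x = ereal r \<longrightarrow> c + B x y - B v y \<le> r"
  proof (cases "\<mu> > 0")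
    case True
    have "c + B x y - B v y \<le> r" if y: "y = - (1 / \<mu>) *\<^sub>R z" and v: "v \<in> V"
      and fx: "f x = ereal r" for x v r y
    proof -
      have "B x y - B v y = B v z / \<mu> - B x z / \<mu>"
        using True y by (simp add: linear_neg[OF lin2] linear_scale[OF lin2] field_simps)
      moreover have "(c - r) * \<mu> \<le> B x z - B v z"
        using sep_real[OF v fx] \<delta> by (simp add: algebra_simps)
      then have "c - r \<le> (B x z - B v z) / \<mu>"
        using True by (simp add: pos_le_divide_eq)
      ultimately show ?thesis
        unfolding diff_divide_distrib by linarith
    qed
    then show ?thesis by blast
  next
    case False
    then have "\<mu> = 0"
      using separation_slope_nonneg[where f=f and B=B, OF x0 v0 sep] by simp
    define M where "M = max 0 ((c - b) / \<delta>)"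
    have "c + B x y - B v y \<le> r" if y: "y = - M *\<^sub>R z" and v: "v \<in> V"
      and fx: "f x = ereal r" for x v r y
    proof -
      have "M * \<delta> \<le> M * (B x z - B v z)"
        using sep_real[OF v fx] \<open>\<mu> = 0\<close> by (intro mult_left_mono) (auto simp: M_def)
      moreover have "c - b \<le> M * \<delta>"
        using \<delta> by (simp add: M_def field_simps max_def)
      moreover have "b \<le> r"
        using bound[of x] fx by simp
      moreover have "B x y - B v y = - M * (B x z - B v z)"
        using y by (simp add: linear_neg[OF lin2] linear_scale[OF lin2] algebra_simps)
      ultimately show ?thesis
        by linarith
    qed
    then show ?thesis by blast
  qed
  then obtain y where y: "\<And>x v r. v \<in> V \<Longrightarrow> f x = ereal r \<Longrightarrow> c + B x y - B v y \<le> r"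
    by blast
  have "ereal (c + B x y - B v y) \<le> f x" if "v \<in> V" for x v
    using y[OF that] bound[of x] by (cases "f x") auto
  then show ?thesis by blast
qed

lemma dual_objective_le_from_minorant:
  fixes B :: "'x::real_vector \<Rightarrow> 'y::real_vector \<Rightarrow> real"
  assumes lin2: "\<And>x. linear (\<lambda>y. B x y)" and no_minf: "\<And>x. f x \<noteq> -\<infinity>"
    and x0: "f x0 = ereal r0" and v0: "v0 \<in> V"
    and minorant: "\<And>x v. v \<in> V \<Longrightarrow> ereal (c + B x y - B v y) \<le> f x"
  shows "fconj B f y + supp_fun B V (- y) \<le> ereal (- c)"
proof -
  have conj_le: "fconj B f y \<le> ereal (B v y - c)" if v: "v \<in> V" for v
    unfolding fconj_def
  proof (rule SUP_least)
    fix x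
    show "ereal (B x y) - f x \<le> ereal (B v y - c)"
      using minorant[OF v, of x] no_minf[of x] by (cases "f x") auto
  qed
  have "ereal (B x0 y) - f x0 \<le> fconj B f y"
    unfolding fconj_def by (rule SUP_upper) simp
  then obtain F where F: "fconj B f y = ereal F"
    using conj_le[OF v0] x0 by (cases "fconj B f y") auto
  have "supp_fun B V (- y) \<le> ereal (- c - F)"
    unfolding supp_fun_def
  proof (rule SUP_least)
    fix v
    assume "v \<in> V"
    then show "ereal (B v (- y)) \<le> ereal (- c - F)"
      using conj_le[OF \<open>v \<in> V\<close>] F by (simp add: linear_neg[OF lin2])
  qed
  then have "fconj B f y + supp_fun B V (- y) \<le> ereal F + ereal (- c - F)"
    unfolding F by (rule add_left_mono)
  then show ?thesis by simp
qed

(* Weak duality, from the Fenchel-Young inequality. *)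
lemma weak_duality:
  fixes B :: "'x::real_vector \<Rightarrow> 'y::real_vector \<Rightarrow> real"
  assumes lin2: "\<And>x. linear (\<lambda>y. B x y)" and no_minf: "\<And>x. f x \<noteq> -\<infinity>"
  shows "- (INF y. fconj B f y + supp_fun B V (- y)) \<le> (INF x\<in>V. f x)"
proof (rule INF_greatest)
  fix x
  assume x: "x \<in> V"
  have "- f x \<le> fconj B f y + supp_fun B V (- y)" for y
  proof -
    have "ereal (B x y) - f x \<le> fconj B f y"
      unfolding fconj_def by (rule SUP_upper) simp
    moreover have "ereal (B x (- y)) \<le> supp_fun B V (- y)"
      unfolding supp_fun_def using x by (rule SUP_upper)
    moreover have "(ereal (B x y) - f x) + ereal (B x (- y)) = - f x"
      using no_minf[of x] by (cases "f x") (auto simp: linear_neg[OF lin2])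
    ultimately show ?thesis
      by (metis add_mono)
  qed
  then have "- f x \<le> (INF y. fconj B f y + supp_fun B V (- y))"
    by (rule INF_greatest)
  then show "- (INF y. fconj B f y + supp_fun B V (- y)) \<le> f x"
    by (simp add: ereal_uminus_le_reorder)
qed

(* If V or dom f is empty, the dual value is -\<infinity> (attained at y = 0). *)
lemma dual_value_degenerate:
  fixes B :: "'x::real_vector \<Rightarrow> 'y::real_vector \<Rightarrow> real"
  assumes lin2: "\<And>x. linear (\<lambda>y. B x y)" and bound: "\<And>x. ereal b \<le> f x"
    and empty: "V = {} \<or> edom f = {}"
  shows "(INF y. fconj B f y + supp_fun B V (- y)) = -\<infinity>"
proof -
  have zero: "B x 0 = 0" for x
    by (rule linear_0[OF lin2])
  have sum_minf: "fconj B f 0 + supp_fun B V (- 0) = -\<infinity>"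
  proof (cases "V = {}")
    case True
    have "fconj B f 0 \<le> ereal (- b)"
      unfolding fconj_def
    proof (rule SUP_least)
      fix x
      show "ereal (B x 0) - f x \<le> ereal (- b)"
        using bound[of x] zero[of x] by (cases "f x") auto
    qed
    moreover have "supp_fun B V (- 0) = -\<infinity>"
      using True by (simp add: supp_fun_def bot_ereal_def)
    ultimately show ?thesis by auto
  next
    case False
    then have "f x = \<infinity>" for x
      using empty by (auto simp: edom_def)
    then have "fconj B f 0 = -\<infinity>"
      by (simp add: fconj_def)
    moreover have "supp_fun B V (- 0) \<le> 0"
      unfolding supp_fun_def by (rule SUP_least) (simp add: zero)
    ultimately show ?thesis by auto
  qed
  have "(INF y. fconj B f y + supp_fun B V (- y)) \<le> fconj B f 0 + supp_fun B V (- 0)"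
    by (rule INF_lower) simp
  then show ?thesis
    unfolding sum_minf by simp
qed

lemma dual_value_below_primal_levels:
  fixes B :: "'x::real_vector \<Rightarrow> 'y::real_vector \<Rightarrow> real"
  assumes dual: "separating_duality B"
    and no_minf: "\<And>x. f x \<noteq> -\<infinity>" and f_convex: "ereal_convex_fun f"
    and f_lsc: "lsc_on (weak_top B) f"
    and K: "compactin (weak_top B) K" and dom: "edom f \<subseteq> K"
    and V_closed: "closedin (weak_top B) V" and V_convex: "convex V"
    and below: "ereal c < (INF x\<in>V. f x)"
  shows "(INF y. fconj B f y + supp_fun B V (- y)) \<le> ereal (- c)"
proof -
  have lin1: "\<And>y. linear (\<lambda>x. B x y)" and lin2: "\<And>x. linear (\<lambda>y. B x y)"
    using dual by (auto simp: separating_duality_def)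
  obtain b :: real where bound: "\<And>x. ereal b \<le> f x"
    using lsc_bounded_below[OF f_lsc no_minf K dom] by blast
  show ?thesis
  proof (cases "V = {} \<or> edom f = {}")
    case True
    then show ?thesis
      using dual_value_degenerate[where B=B and f=f, OF lin2 bound True] by simp
  next
    case False
    then obtain v0 x0 where v0: "v0 \<in> V" and "f x0 < \<infinity>"
      by (auto simp: edom_def)
    then obtain r0 where x0: "f x0 = ereal r0"
      using no_minf[of x0] by (cases "f x0") auto
    obtain c' where c': "c < c'" "ereal c' < (INF x\<in>V. f x)"
      using ereal_dense2[OF below] by auto
    then have "\<forall>v\<in>V. ereal c' < f v"
      by (meson INF_lower less_le_trans)
    then obtain Y e where "finite Y" "e > 0"
      and gap: "\<forall>x v. v \<in> V \<longrightarrow> (\<forall>y\<in>Y. \<bar>B x y - B v y\<bar> < e) \<longrightarrow> ereal (c + e) \<le> f x"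
      using lsc_sublevel_gap[OF f_lsc K dom V_closed c'(1)] by blast
    then obtain \<delta> \<mu> z where "\<delta> > 0"
      and sep: "\<forall>x v t. v \<in> V \<longrightarrow> f x \<le> ereal (c + t) \<longrightarrow> \<delta> \<le> \<mu> * t + (B x z - B v z)"
      using separation_from_uniform_gap[of B, OF lin1 lin2 f_convex V_convex] by blast
    then obtain y where "\<forall>x v. v \<in> V \<longrightarrow> ereal (c + B x y - B v y) \<le> f x"
      using affine_minorant_from_separation[where B=B and f=f, OF lin2 bound x0 v0] by blast
    then have "fconj B f y + supp_fun B V (- y) \<le> ereal (- c)"
      using dual_objective_le_from_minorant[where B=B and f=f, OF lin2 no_minf x0 v0] by blast
    then show ?thesis
      by (meson INF_lower UNIV_I order_trans)
  qed
qed

theorem fenchel_duality_compact_domain: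
  fixes B :: "'x::real_vector \<Rightarrow> 'y::real_vector \<Rightarrow> real"
  assumes dual: "separating_duality B"
    and no_minf: "\<And>x. f x \<noteq> -\<infinity>" and f_convex: "ereal_convex_fun f"
    and f_lsc: "lsc_on (weak_top B) f"
    and K: "compactin (weak_top B) K" and dom: "edom f \<subseteq> K"
    and V_closed: "closedin (weak_top B) V" and V_convex: "convex V"
  shows "(INF x\<in>V. f x) = - (INF y. fconj B f y + supp_fun B V (- y))"
    and "(INF x\<in>V. f x) \<noteq> -\<infinity>"
proof -
  have lin2: "\<And>x. linear (\<lambda>y. B x y)"
    using dual by (auto simp: separating_duality_def)
  have "(INF x\<in>V. f x) \<le> - (INF y. fconj B f y + supp_fun B V (- y))"
  proof (rule dense_le)
    fix a
    assume "a < (INF x\<in>V. f x)"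
    then show "a \<le> - (INF y. fconj B f y + supp_fun B V (- y))"
    proof (cases a)
      case (real c)
      then have "(INF y. fconj B f y + supp_fun B V (- y)) \<le> - ereal c"
        using dual_value_below_primal_levels[OF assms] \<open>a < _\<close> by simp
      then show ?thesis
        using real ereal_minus_le_minus[of "- ereal c"] by simp
    qed auto
  qed
  then show "(INF x\<in>V. f x) = - (INF y. fconj B f y + supp_fun B V (- y))"
    using weak_duality[of B, OF lin2 no_minf] by (rule antisym)
  obtain b :: real where "\<And>x. ereal b \<le> f x"
    using lsc_bounded_below[OF f_lsc no_minf K dom] by blast
  then have "ereal b \<le> (INF x\<in>V. f x)"
    by (rule INF_greatest)
  then show "(INF x\<in>V. f x) \<noteq> -\<infinity>"
    by auto
qed

(* Both cases follow from the general duality theorem: in the second case every W inside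
   the interior of V misses dom f, so the primal value over W is +\<infinity>. *)
theorem mainTheorem17:
  fixes B :: "'x::real_vector \<Rightarrow> 'y::real_vector \<Rightarrow> real"
    and f :: "'x \<Rightarrow> ereal" and V :: "'x set"
  assumes dual: "separating_duality B"
    and f_nonneginf: "\<forall>x. f x \<noteq> -\<infinity>"
    and f_convex: "ereal_convex_fun f"
    and f_lsc: "lsc_on (weak_top B) f"
    and dom_cpt: "\<exists>K. compactin (weak_top B) K \<and> edom f \<subseteq> K"
    and V_closed: "closedin (weak_top B) V"
    and V_convex: "convex V"
  shows
    "((V \<inter> edom f \<noteq> {} \<or> V \<inter> (weak_top B closure_of edom f) = {}) \<longrightarrow>
       ((INF x\<in>V. f x) = - (INF y. fconj B f y + supp_fun B V (- y)) \<and>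
        (INF x\<in>V. f x) \<noteq> -\<infinity>)) \<and>
    (\<not> (V \<inter> edom f \<noteq> {} \<or> V \<inter> (weak_top B closure_of edom f) = {}) \<longrightarrow>
       (\<forall>W. closedin (weak_top B) W \<and> convex W \<and> W \<subseteq> weak_top B interior_of V \<longrightarrow>
          (INF x\<in>W. f x) = - (INF y. fconj B f y + supp_fun B W (- y)) \<and>
          (INF x\<in>W. f x) = \<infinity>))"
proof -
  obtain K where K: "compactin (weak_top B) K" "edom f \<subseteq> K"
    using dom_cpt by blast
  note duality = fenchel_duality_compact_domain[OF dual f_nonneginf[rule_format] f_convex f_lsc K]
  have primal_infinite: "(INF x\<in>W. f x) = \<infinity>"
    if W: "W \<subseteq> weak_top B interior_of V" and disj: "V \<inter> edom f = {}" for W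
  proof -
    have "f x = \<infinity>" if "x \<in> W" for x
      using that W disj interior_of_subset[of "weak_top B" V] by (auto simp: edom_def)
    then have "\<infinity> \<le> (INF x\<in>W. f x)"
      by (intro INF_greatest) simp
    then show ?thesis
      by simp
  qed
  show ?thesis
    using duality[OF V_closed V_convex] duality primal_infinite by blast
qed

end
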